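(* Let $q$ be a prime power. There exists a $2$-code of $\mathcal H_{3,q^2}$ of size $q^6 + \frac{q(q-1)(q^4+q^2+1)}{2}$.
   Context: $\mathcal H_{3,q^2}$ is the set of $3\times 3$ Hermitian matrices over ${\rm GF}(q^2)$ (matrices $A=(a_{ij})$ with $a_{ji}=a_{ij}^q$), with rank distance $d_r(A,B)={\rm rk}(A-B)$. A $2$-code is a non-empty subset whose minimum distance $\min\{{\rm rk}(c_1-c_2): c_1\neq c_2\}$ equals $2$. *)

theory Defs
  imports "Jordan_Normal_Form.DL_Rank"
begin

text \<open>3x3 Hermitian matrices over a field F of order q^2: a_ji = a_ij^q.\<close>
definition hermitian3 :: "nat \<Rightarrow> ('a::field) mat set" where
  "hermitian3 q = {A. A \<in> carrier_mat 3 3 \<and>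
     (\<forall>i<3. \<forall>j<3. A $$ (j, i) = (A $$ (i, j)) ^ q)}"

definition rank_dist :: "('a::field) mat \<Rightarrow> 'a mat \<Rightarrow> nat" where
  "rank_dist A B = vec_space.rank 3 (A - B)"

definition is_herm_code :: "nat \<Rightarrow> nat \<Rightarrow> ('a::field) mat set \<Rightarrow> bool" where
  "is_herm_code q d C \<longleftrightarrow> C \<noteq> {} \<and> C \<subseteq> hermitian3 q \<and>
     (\<forall>c1\<in>C. \<forall>c2\<in>C. c1 \<noteq> c2 \<longrightarrow> rank_dist c1 c2 \<ge> d) \<and>
     (\<exists>c1\<in>C. \<exists>c2\<in>C. c1 \<noteq> c2 \<and> rank_dist c1 c2 = d)"

end

theory Submission
  imports Defs "Jordan_Normal_Form.DL_Rank_Submatrix" "HOL-Computational_Algebra.Polynomial"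
    "HOL-Number_Theory.Residues" "HOL-Decision_Procs.Algebra_Aux"
begin

(* Write a^q for the conjugate of a in GF(q^2), Tr a = a + a^q and N a = a a^q.  A Hermitian
   3x3 matrix is determined by its diagonal, which lies in GF(q), and its upper entries x, y, z.
   The involution a \<mapsto> -a^q negates the trace, so the elements of nonzero trace fall into
   pairs {a, -a^q}; let U contain one element of each pair.  For s = x + y + z the code consists
   of the matrices with upper entries x, y, z whose diagonal is zero if s \<notin> U, and Tr s placed
   at one of the three diagonal positions if s \<in> U.
   Every principal 2x2 minor of a difference of two codewords is -N of an off-diagonal entry,
   except when the two diagonals sit at different positions i, j; then the (i,j) minor is
   -(Tr s Tr s' + N (s - s')) = -N (s + s'^q) if only the (i,j) entries differ, and this is
   nonzero because s \<noteq> -s'^q for s, s' \<in> U.  Hence distinct codewords are at rank distance at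
   least 2.  At most q elements have trace 0, so the code has q^6 + 2 q^4 |U| \<ge> q^6 + q^5 (q - 1)
   elements, which is more than required; it contains two codewords at distance exactly 2, and
   any subset of the required size containing both is a 2-code. *)

lemma Units_cring_class_ops_field: "Units (cring_class_ops :: 'a::field ring) = - {0}"
  unfolding Units_def
proof (auto simp: class_simps)
  fix x :: 'a
  assume "x \<noteq> 0"
  then show "\<exists>y\<in>carrier cring_class_ops. y * x = 1 \<and> x * y = 1"
    by (intro bexI[of _ "inverse x"]) (simp_all add: class_simps)
qed

lemma finite_field_power_card:
  fixes x :: "'a::{finite,field}"
  shows "x ^ card (UNIV :: 'a set) = x"
proof (cases "x = 0")
  case False
  have "x ^ card (- {0::'a}) = 1"
    using cring_class.units_power_order_eq_one[where 'a = 'a] False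
    by (simp add: Units_cring_class_ops_field)
  moreover have "card (UNIV :: 'a set) = Suc (card (- {0::'a}))"
    using finite_UNIV_card_ge_0[where 'a = 'a]
    by (simp add: Compl_eq_Diff_UNIV card_Diff_singleton)
  ultimately show ?thesis
    by simp
qed (simp add: finite_UNIV_card_ge_0)

lemma CHAR_eq_prime_if_card_prime_power:
  assumes "prime p" and "card (UNIV :: 'a::{finite,field} set) = p ^ n"
  shows "CHAR('a) = p"
proof -
  have "prime CHAR('a)"
    using prime_CHAR_semidom finite_imp_CHAR_pos[where 'a = 'a] by simp
  moreover have "CHAR('a) dvd p ^ n"
    using CHAR_dvd_CARD[where 'a = 'a] assms(2) by simp
  ultimately show ?thesis
    using assms(1) prime_dvd_power primes_dvd_imp_eq by blast
qed

lemma power_add_prime_power_char: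
  assumes "prime p" and "card (UNIV :: 'a::{finite,field} set) = p ^ n" and "q = p ^ k"
  shows "(x + y :: 'a) ^ q = x ^ q + y ^ q"
  using freshmans_dream' CHAR_eq_prime_if_card_prime_power[OF assms(1,2)] assms(1,3) by blast

lemma power_power_if_card_eq_square:
  assumes "card (UNIV :: 'a::{finite,field} set) = q ^ 2"
  shows "((x :: 'a) ^ q) ^ q = x"
  using finite_field_power_card[of x] assms by (simp add: power2_eq_square power_mult)

definition trace_q :: "nat \<Rightarrow> 'a::field \<Rightarrow> 'a" where
  "trace_q q a = a + a ^ q"

definition norm_q :: "nat \<Rightarrow> 'a::field \<Rightarrow> 'a" where
  "norm_q q a = a * a ^ q"

definition neg_conj :: "nat \<Rightarrow> 'a::field \<Rightarrow> 'a" where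
  "neg_conj q a = - (a ^ q)"

(* The choice depends only on the pair {a, neg_conj q a}, so trace_reps below contains exactly
   one element of each such pair of elements with nonzero trace. *)
definition trace_rep :: "nat \<Rightarrow> 'a::field \<Rightarrow> 'a" where
  "trace_rep q a = (SOME b. b \<in> {a, neg_conj q a})"

definition trace_reps :: "nat \<Rightarrow> 'a::field set" where
  "trace_reps q = {a. trace_q q a \<noteq> 0 \<and> trace_rep q a = a}"

lemma trace_rep_mem: "trace_rep q a \<in> {a, neg_conj q a}"
  unfolding trace_rep_def by (rule someI[of _ a]) simp

definition herm3_mat :: "nat \<Rightarrow> (nat \<Rightarrow> 'a::field) \<Rightarrow> 'a \<Rightarrow> 'a \<Rightarrow> 'a \<Rightarrow> 'a mat" where
  "herm3_mat q d x y z = mat 3 3 (\<lambda>(i, j).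
     if i = j then d i
     else if (i, j) = (0, 1) then x else if (i, j) = (1, 0) then x ^ q
     else if (i, j) = (0, 2) then y else if (i, j) = (2, 0) then y ^ q
     else if (i, j) = (1, 2) then z else z ^ q)"

lemma herm3_mat_carrier [simp]: "herm3_mat q d x y z \<in> carrier_mat 3 3"
  by (simp add: herm3_mat_def)

lemma herm3_mat_eqD:
  assumes "herm3_mat q d x y z = herm3_mat q d' x' y' z'"
  shows "x = x'" "y = y'" "z = z'" "d 0 = d' 0" "d 1 = d' 1" "d 2 = d' 2"
proof -
  have "herm3_mat q d x y z $$ (i, j) = herm3_mat q d' x' y' z' $$ (i, j)" for i j
    using assms by simp
  from this[of 0 1] this[of 0 2] this[of 1 2] this[of 0 0] this[of 1 1] this[of 2 2]
  show "x = x'" "y = y'" "z = z'" "d 0 = d' 0" "d 1 = d' 1" "d 2 = d' 2"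
    by (simp_all add: herm3_mat_def)
qed

lemma det_2x2:
  assumes "(A :: 'a::comm_ring_1 mat) \<in> carrier_mat 2 2"
  shows "det A = A $$ (0, 0) * A $$ (1, 1) - A $$ (0, 1) * A $$ (1, 0)"
proof -
  have "det A = (\<Sum>i<2. A $$ (i, 0) * cofactor A i 0)"
    by (rule laplace_expansion_column[OF assms]) simp
  also have "\<dots> = A $$ (0, 0) * cofactor A 0 0 + A $$ (1, 0) * cofactor A 1 0"
    by (simp add: numeral_2_eq_2)
  also have "cofactor A 0 0 = A $$ (1, 1)"
    using assms unfolding cofactor_def by (subst det_single) (auto simp: mat_delete_def)
  also have "cofactor A 1 0 = - A $$ (0, 1)"
    using assms unfolding cofactor_def by (subst det_single) (auto simp: mat_delete_def)
  finally show ?thesis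
    by (simp add: algebra_simps)
qed

lemma pick_doubleton:
  assumes "(a::nat) < b"
  shows "pick {a, b} 0 = a" and "pick {a, b} 1 = b"
proof -
  show pick0: "pick {a, b} 0 = a"
    unfolding pick.simps by (rule Least_equality) (use assms in auto)
  have "pick {a, b} (Suc 0) = b"
    unfolding pick.simps(2) pick0 by (rule Least_equality) (use assms in auto)
  then show "pick {a, b} 1 = b"
    by simp
qed

lemma two_le_rank_if_principal_minor_neq_0:
  fixes M :: "'a::field mat"
  assumes M: "M \<in> carrier_mat n n" and ab: "a < b" "b < n"
    and minor: "M $$ (a, a) * M $$ (b, b) - M $$ (a, b) * M $$ (b, a) \<noteq> 0"
  shows "2 \<le> vec_space.rank n M"
proof -
  let ?S = "submatrix M {a, b} {a, b}"
  have "{j. j < n \<and> j \<in> {a, b}} = {a, b}"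
    using ab by auto
  then have card: "card {j. j < n \<and> j \<in> {a, b}} = 2"
    using ab by simp
  then have S: "?S \<in> carrier_mat 2 2"
    using M by (intro carrier_matI) (simp_all add: dim_submatrix)
  have S_entry: "?S $$ (i, j) = M $$ (pick {a, b} i, pick {a, b} j)" if "i < 2" "j < 2" for i j
    using that M card by (intro submatrix_index) simp_all
  have "det ?S = M $$ (a, a) * M $$ (b, b) - M $$ (a, b) * M $$ (b, a)"
    unfolding det_2x2[OF S] using S_entry pick_doubleton[OF ab(1)] by simp
  then have "det ?S \<noteq> 0"
    using minor by simp
  from vec_space.rank_gt_minor[OF M this] show ?thesis
    unfolding card .
qed

lemma rank_less_if_zero_row:
  fixes M :: "'a::field mat"
  assumes M: "M \<in> carrier_mat n n" and "i < n" and zero: "\<And>j. j < n \<Longrightarrow> M $$ (i, j) = 0"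
  shows "vec_space.rank n M < n"
proof -
  have "det M = 0"
    unfolding laplace_expansion_row[OF M \<open>i < n\<close>] by (simp add: zero)
  then have "vec_space.rank n M \<noteq> n"
    using vec_space.det_rank_iff[OF M] by simp
  with vec_space.rank_le_nc[OF M] show ?thesis
    by simp
qed

lemma two_le_rank_herm3_mat:
  assumes "d 0 * d 1 \<noteq> norm_q q x \<or> d 0 * d 2 \<noteq> norm_q q y \<or> d 1 * d 2 \<noteq> norm_q q z"
  shows "2 \<le> vec_space.rank 3 (herm3_mat q d x y z)"
proof -
  note minor = two_le_rank_if_principal_minor_neq_0[OF herm3_mat_carrier]
  from assms consider
    "d 0 * d 1 \<noteq> norm_q q x" | "d 0 * d 2 \<noteq> norm_q q y" | "d 1 * d 2 \<noteq> norm_q q z"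
    by blast
  then show ?thesis
  proof cases
    case 1
    then show ?thesis
      by (intro minor[of 0 1]) (simp_all add: herm3_mat_def norm_q_def)
  next
    case 2
    then show ?thesis
      by (intro minor[of 0 2]) (simp_all add: herm3_mat_def norm_q_def)
  next
    case 3
    then show ?thesis
      by (intro minor[of 1 2]) (simp_all add: herm3_mat_def norm_q_def)
  qed
qed

definition code_diag :: "nat option \<Rightarrow> 'a::zero \<Rightarrow> nat \<Rightarrow> 'a" where
  "code_diag l s j = (if l = Some j then s else 0)"

definition codeword :: "nat \<Rightarrow> nat option \<Rightarrow> 'a::field \<Rightarrow> 'a \<Rightarrow> 'a \<Rightarrow> 'a mat" where
  "codeword q l x y z = herm3_mat q (code_diag l (trace_q q (x + y + z))) x y z"

definition code_params :: "nat \<Rightarrow> (nat option \<times> 'a::field \<times> 'a \<times> 'a) set" where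
  "code_params q = (SIGMA l:{None, Some 0, Some 1, Some 2}.
     {(x, y, z). x + y + z \<in> trace_reps q \<longleftrightarrow> l \<noteq> None})"

definition herm_code :: "nat \<Rightarrow> 'a::field mat set" where
  "herm_code q = (\<lambda>(l, x, y, z). codeword q l x y z) ` code_params q"

lemma codeword_eqD:
  assumes eq: "codeword q l x y z = codeword q l' x' y' z'"
    and "(l, x, y, z) \<in> code_params q" and "(l', x', y', z') \<in> code_params q"
  shows "l = l' \<and> x = x' \<and> y = y' \<and> z = z'"
proof -
  note entries = herm3_mat_eqD[OF eq[unfolded codeword_def]]
  then have "x = x'" "y = y'" "z = z'"
    by simp_all
  with assms(2,3) entries(4-6) show ?thesis
    by (auto simp: code_params_def code_diag_def trace_reps_def)
qed

lemma inj_on_codeword: "inj_on (\<lambda>(l, x, y, z). codeword q l x y z) (code_params q)"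
  by (rule inj_onI) (auto dest: codeword_eqD)

lemma card_triples_sum_mem:
  fixes S :: "'a::ab_group_add set"
  assumes "finite (UNIV :: 'a set)"
  shows "card {(x, y, z). x + y + z \<in> S} = card (UNIV :: 'a set) ^ 2 * card S"
proof -
  have "bij_betw (\<lambda>(x, y, s). (x, y, s - x - y)) (UNIV \<times> UNIV \<times> S) {(x, y, z). x + y + z \<in> S}"
    by (rule bij_betwI[where g = "\<lambda>(x, y, z). (x, y, x + y + z)"]) auto
  then show ?thesis
    by (simp add: bij_betw_same_card[symmetric] card_cartesian_product power2_eq_square)
qed

lemma card_herm_code:
  assumes fin: "finite (UNIV :: 'a::field set)"
  shows "card (herm_code q :: 'a mat set)
    = card (UNIV :: 'a set) ^ 3 + 2 * card (UNIV :: 'a set) ^ 2 * card (trace_reps q :: 'a set)"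
proof -
  let ?F = "card (UNIV :: 'a set)" and ?u = "card (trace_reps q :: 'a set)"
  have "card (herm_code q :: 'a mat set) = card (code_params q :: (_ \<times> 'a \<times> 'a \<times> 'a) set)"
    unfolding herm_code_def by (rule card_image[OF inj_on_codeword])
  also have "\<dots> = (\<Sum>l\<in>{None, Some (0::nat), Some 1, Some 2}.
      card {(x, y, z). x + y + z \<in> (trace_reps q :: 'a set) \<longleftrightarrow> l \<noteq> None})"
    unfolding code_params_def using fin
    by (intro card_SigmaI) (auto intro: finite_subset[OF subset_UNIV] simp: finite_Prod_UNIV)
  also have "\<dots> = card {(x, y, z). x + y + z \<in> - (trace_reps q :: 'a set)}
      + 3 * card {(x, y, z). x + y + z \<in> (trace_reps q :: 'a set)}"
    by simp
  also have "\<dots> = ?F ^ 2 * (?F - ?u) + 3 * (?F ^ 2 * ?u)"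
    using card_Diff_subset[OF finite_subset[OF subset_UNIV fin] subset_UNIV, of "trace_reps q"]
      card_triples_sum_mem[OF fin, of "- trace_reps q"] card_triples_sum_mem[OF fin, of "trace_reps q"]
    by (simp add: Compl_eq_Diff_UNIV)
  also have "\<dots> = ?F ^ 3 + 2 * ?F ^ 2 * ?u"
    using card_mono[OF fin subset_UNIV, of "trace_reps q"]
    by (simp add: diff_mult_distrib2 power_numeral_reduce)
  finally show ?thesis .
qed

lemma target_size_le:
  fixes q u :: nat
  assumes "2 \<le> q" and "q ^ 2 - q \<le> 2 * u"
  shows "q ^ 6 + q * (q - 1) * (q ^ 4 + q ^ 2 + 1) div 2 \<le> q ^ 6 + 2 * q ^ 4 * u"
proof -
  have "4 \<le> q ^ 2"
    using power_mono[OF assms(1), of 2] by simp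
  then have "4 * q ^ 2 \<le> q ^ 4"
    using mult_right_mono[of 4 "q ^ 2" "q ^ 2"] by simp
  with \<open>4 \<le> q ^ 2\<close> have "q ^ 4 + q ^ 2 + 1 \<le> 2 * q ^ 4"
    by linarith
  then have "(q ^ 2 - q) * (q ^ 4 + q ^ 2 + 1) \<le> (q ^ 2 - q) * (2 * q ^ 4)"
    by (rule mult_left_mono) simp
  moreover have "q * (q - 1) = q ^ 2 - q"
    by (simp add: power2_eq_square diff_mult_distrib2)
  ultimately have "q * (q - 1) * (q ^ 4 + q ^ 2 + 1) \<le> (q ^ 2 - q) * (2 * q ^ 4)"
    by simp
  then have "q * (q - 1) * (q ^ 4 + q ^ 2 + 1) div 2 \<le> (q ^ 2 - q) * q ^ 4"
    by simp
  also have "\<dots> \<le> 2 * q ^ 4 * u"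
    using assms(2) by (simp add: mult.commute)
  finally show ?thesis
    by simp
qed

context
  fixes q :: nat
  assumes power_q_add: "\<And>x y :: 'a::field. (x + y) ^ q = x ^ q + y ^ q"
    and power_q_power_q: "\<And>x :: 'a. (x ^ q) ^ q = x"
    and two_le_q: "2 \<le> q"
begin

lemma power_q_zero: "(0::'a) ^ q = 0"
  using two_le_q by simp

lemma power_q_neg: "(- x :: 'a) ^ q = - (x ^ q)"
proof -
  have "x ^ q + (- x) ^ q = 0"
    using power_q_add[of x "- x"] power_q_zero by simp
  then show ?thesis
    by (simp add: eq_neg_iff_add_eq_0 add.commute)
qed

lemma power_q_diff: "(x - y :: 'a) ^ q = x ^ q - y ^ q"
  using power_q_add[of x "- y"] power_q_neg[of y] by simp

lemma trace_q_power_q: "trace_q q (a::'a) ^ q = trace_q q a"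
  unfolding trace_q_def power_q_add power_q_power_q by (simp add: add.commute)

lemma norm_q_eq_0_iff: "norm_q q (a::'a) = 0 \<longleftrightarrow> a = 0"
  using two_le_q by (simp add: norm_q_def)

lemma trace_mult_trace_add_norm_diff:
  "trace_q q a * trace_q q b + norm_q q (a - b) = norm_q q (a + b ^ q)" for a b :: 'a
  unfolding trace_q_def norm_q_def power_q_diff power_q_add power_q_power_q
  by (simp add: algebra_simps)

lemma neg_conj_neg_conj: "neg_conj q (neg_conj q a) = (a::'a)"
  unfolding neg_conj_def power_q_neg power_q_power_q by simp

lemma trace_neg_conj: "trace_q q (neg_conj q a) = - trace_q q (a::'a)"
  unfolding trace_q_def neg_conj_def power_q_neg power_q_power_q by simp

lemma trace_rep_neg_conj: "trace_rep q (neg_conj q a) = trace_rep q (a::'a)"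
  unfolding trace_rep_def neg_conj_neg_conj by (simp add: insert_commute)

lemma neg_conj_notin_trace_reps:
  assumes "(a::'a) \<in> trace_reps q"
  shows "neg_conj q a \<notin> trace_reps q"
proof
  assume "neg_conj q a \<in> trace_reps q"
  then have "neg_conj q a = trace_rep q a"
    using trace_rep_neg_conj[of a] unfolding trace_reps_def by simp
  also have "\<dots> = a"
    using assms unfolding trace_reps_def by simp
  finally have "a + a ^ q = 0"
    unfolding neg_conj_def by (metis add.left_inverse)
  with assms show False
    unfolding trace_reps_def trace_q_def by simp
qed

lemma trace_reps_cover:
  assumes "trace_q q (a::'a) \<noteq> 0"
  shows "a \<in> trace_reps q \<or> neg_conj q a \<in> trace_reps q"
proof (cases "trace_rep q a = a")
  case False
  then have "trace_rep q (neg_conj q a) = neg_conj q a"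
    using trace_rep_mem[of q a] by (auto simp: trace_rep_neg_conj)
  with assms show ?thesis
    unfolding trace_reps_def by (simp add: trace_neg_conj)
qed (use assms in \<open>simp add: trace_reps_def\<close>)

lemma card_nonzero_trace:
  assumes "finite (UNIV :: 'a set)"
  shows "card {a::'a. trace_q q a \<noteq> 0} = 2 * card (trace_reps q :: 'a set)"
proof -
  have split: "{a::'a. trace_q q a \<noteq> 0} = trace_reps q \<union> neg_conj q ` trace_reps q"
  proof (intro equalityI subsetI)
    fix a :: 'a
    assume "a \<in> {a. trace_q q a \<noteq> 0}"
    then have "a \<in> trace_reps q \<or> neg_conj q a \<in> trace_reps q"
      using trace_reps_cover by simp
    then show "a \<in> trace_reps q \<union> neg_conj q ` trace_reps q"
    proof
      assume "neg_conj q a \<in> trace_reps q"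
      then have "neg_conj q (neg_conj q a) \<in> neg_conj q ` trace_reps q"
        by (rule imageI)
      then show ?thesis
        by (simp add: neg_conj_neg_conj)
    qed simp
  qed (auto simp: trace_reps_def trace_neg_conj)
  have disjoint: "trace_reps q \<inter> neg_conj q ` trace_reps q = ({} :: 'a set)"
    using neg_conj_notin_trace_reps by blast
  have inj: "inj_on (neg_conj q :: 'a \<Rightarrow> 'a) (trace_reps q)"
    by (rule inj_on_inverseI[where g = "neg_conj q"]) (rule neg_conj_neg_conj)
  have fin: "finite (trace_reps q :: 'a set)"
    using finite_subset[OF subset_UNIV assms] .
  show ?thesis
    unfolding split card_Un_disjoint[OF fin finite_imageI[OF fin] disjoint] card_image[OF inj]
    by simp
qed

lemma card_trace_eq_0_le: "card {a::'a. trace_q q a = 0} \<le> q"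
proof -
  define P :: "'a poly" where "P = Polynomial.monom 1 q + [:0, 1:]"
  have "degree P = q"
    unfolding P_def using two_le_q by (subst degree_add_eq_left) (auto simp: degree_monom_eq)
  then have "P \<noteq> 0"
    using two_le_q by auto
  have "{a::'a. trace_q q a = 0} = {a. poly P a = 0}"
    unfolding P_def trace_q_def by (auto simp: poly_monom add.commute)
  then show ?thesis
    using card_poly_roots_bound[OF \<open>P \<noteq> 0\<close>] \<open>degree P = q\<close> by simp
qed

lemma card_trace_reps_ge:
  assumes "finite (UNIV :: 'a set)"
  shows "card (UNIV :: 'a set) - q \<le> 2 * card (trace_reps q :: 'a set)"
proof -
  have "{a::'a. trace_q q a \<noteq> 0} = UNIV - {a. trace_q q a = 0}"
    by auto
  then have "card {a::'a. trace_q q a \<noteq> 0} = card (UNIV :: 'a set) - card {a::'a. trace_q q a = 0}"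
    using card_Diff_subset[OF finite_subset[OF subset_UNIV assms]] by simp
  then show ?thesis
    using card_nonzero_trace[OF assms] card_trace_eq_0_le by simp
qed

lemma trace_mult_trace_add_norm_diff_neq_0:
  assumes "(a::'a) \<in> trace_reps q" and "b \<in> trace_reps q"
  shows "trace_q q a * trace_q q b + norm_q q (a - b) \<noteq> 0"
proof -
  have "a \<noteq> neg_conj q b"
    using assms neg_conj_notin_trace_reps by blast
  then have "a + b ^ q \<noteq> 0"
    unfolding neg_conj_def by (simp add: eq_neg_iff_add_eq_0)
  then show ?thesis
    unfolding trace_mult_trace_add_norm_diff norm_q_eq_0_iff .
qed

lemma herm3_mat_hermitian3:
  assumes "\<And>j. d j ^ q = (d j :: 'a)"
  shows "herm3_mat q d x y z \<in> hermitian3 q"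
  unfolding hermitian3_def
proof (intro CollectI conjI allI impI herm3_mat_carrier)
  fix i j :: nat
  assume "i < 3" "j < 3"
  then show "herm3_mat q d x y z $$ (j, i) = (herm3_mat q d x y z $$ (i, j)) ^ q"
    using assms power_q_power_q by (auto simp: herm3_mat_def numeral_3_eq_3 less_Suc_eq)
qed

lemma herm3_mat_diff:
  "herm3_mat q d x y z - herm3_mat q d' x' y' z'
    = herm3_mat q (\<lambda>j. d j - d' j) (x - x') (y - y') (z - z')" for x y z x' y' z' :: 'a
  by (rule eq_matI) (auto simp: herm3_mat_def power_q_diff)

lemma herm_code_subset_hermitian3: "herm_code q \<subseteq> (hermitian3 q :: 'a mat set)"
  unfolding herm_code_def codeword_def
  by (auto intro!: herm3_mat_hermitian3 simp: code_diag_def trace_q_power_q power_q_zero)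

lemma two_le_rank_dist_codeword:
  fixes x y z x' y' z' :: 'a
  assumes p: "(l, x, y, z) \<in> code_params q" and p': "(l', x', y', z') \<in> code_params q"
    and ne: "codeword q l x y z \<noteq> codeword q l' x' y' z'"
  shows "2 \<le> rank_dist (codeword q l x y z) (codeword q l' x' y' z')"
proof -
  define u v where "u = x + y + z" and "v = x' + y' + z'"
  define d where "d = (\<lambda>j. code_diag l (trace_q q u) j - code_diag l' (trace_q q v) j)"
  have diff: "codeword q l x y z - codeword q l' x' y' z' = herm3_mat q d (x - x') (y - y') (z - z')"
    unfolding codeword_def d_def u_def v_def by (rule herm3_mat_diff)
  have mem: "u \<in> trace_reps q \<longleftrightarrow> l \<noteq> None" "v \<in> trace_reps q \<longleftrightarrow> l' \<noteq> None"
    and pos: "l \<in> {None, Some 0, Some 1, Some 2}" "l' \<in> {None, Some 0, Some 1, Some 2}"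
    using p p' by (auto simp: code_params_def u_def v_def)
  have norm_neq_0: "norm_q q e \<noteq> 0" if "e \<noteq> 0" for e :: 'a
    using that norm_q_eq_0_iff by simp
  have trace_prod: "- (trace_q q u * trace_q q v) \<noteq> norm_q q (u - v)" if "l \<noteq> None" "l' \<noteq> None"
    using trace_mult_trace_add_norm_diff_neq_0[of u v] mem that
    by (simp add: neg_eq_iff_add_eq_0)
  have off_diag: "x \<noteq> x' \<or> y \<noteq> y' \<or> z \<noteq> z'" if "l = l' \<or> l = None \<or> l' = None"
    using ne mem that unfolding u_def v_def by auto
  have sum_diff: "y = y' \<Longrightarrow> z = z' \<Longrightarrow> u - v = x - x'"
    "x = x' \<Longrightarrow> z = z' \<Longrightarrow> u - v = y - y'" "x = x' \<Longrightarrow> y = y' \<Longrightarrow> u - v = z - z'"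
    unfolding u_def v_def by simp_all
  (* d has two nonzero entries only if l and l' are distinct positions, and then their product
     is -Tr u Tr v *)
  have "d 0 * d 1 \<noteq> norm_q q (x - x') \<or> d 0 * d 2 \<noteq> norm_q q (y - y')
      \<or> d 1 * d 2 \<noteq> norm_q q (z - z')"
    using pos norm_neq_0 trace_prod off_diag sum_diff
    by (cases "x = x'"; cases "y = y'"; cases "z = z'") (auto simp: d_def code_diag_def mult.commute)
  then show ?thesis
    unfolding rank_dist_def diff by (rule two_le_rank_herm3_mat)
qed

lemma two_le_rank_dist_herm_code:
  assumes "c1 \<in> herm_code q" and "c2 \<in> herm_code q" and "c1 \<noteq> (c2 :: 'a mat)"
  shows "2 \<le> rank_dist c1 c2"
  using assms two_le_rank_dist_codeword unfolding herm_code_def by auto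

lemma herm_code_rank_dist_eq_2:
  "\<exists>c1 \<in> herm_code q. \<exists>c2 \<in> herm_code q. c1 \<noteq> (c2 :: 'a mat) \<and> rank_dist c1 c2 = 2"
proof -
  obtain e :: 'a where e: "e \<noteq> 0" "e \<notin> trace_reps q"
  proof (cases "(1::'a) \<in> trace_reps q")
    case True
    then have "neg_conj q (1::'a) \<notin> trace_reps q"
      by (rule neg_conj_notin_trace_reps)
    then show ?thesis
      using that[of "- 1"] by (simp add: neg_conj_def)
  next
    case False
    then show ?thesis
      using that[of 1] by simp
  qed
  have "0 \<notin> (trace_reps q :: 'a set)"
    by (simp add: trace_reps_def trace_q_def power_q_zero)
  let ?c1 = "codeword q None e 0 0" and ?c2 = "codeword q None (0::'a) 0 0"
  have params: "(None, e, 0, 0) \<in> code_params q" "(None, 0::'a, 0::'a, 0::'a) \<in> code_params q"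
    using e(2) \<open>0 \<notin> trace_reps q\<close> by (simp_all add: code_params_def)
  have mem: "?c1 \<in> herm_code q" "?c2 \<in> herm_code q"
    unfolding herm_code_def by (rule rev_image_eqI[OF params(1)] rev_image_eqI[OF params(2)]; simp)+
  have diff: "?c1 - ?c2 = herm3_mat q (\<lambda>_. 0) e 0 0"
    unfolding codeword_def herm3_mat_diff by (simp add: code_diag_def)
  have "?c1 \<noteq> ?c2"
    using herm3_mat_eqD(1)[of q _ e 0 0 _ 0 0 0] e(1) unfolding codeword_def by blast
  moreover have "2 \<le> vec_space.rank 3 (?c1 - ?c2)"
    unfolding diff using e(1) norm_q_eq_0_iff by (intro two_le_rank_herm3_mat) simp
  moreover have "vec_space.rank 3 (?c1 - ?c2) < 3"
    unfolding diff
    by (rule rank_less_if_zero_row[of _ _ 2]) (auto simp: herm3_mat_def power_q_zero)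
  ultimately have "?c1 \<noteq> ?c2 \<and> rank_dist ?c1 ?c2 = 2"
    unfolding rank_dist_def by linarith
  with mem show ?thesis
    by blast
qed

lemma target_size_le_card_herm_code:
  assumes "card (UNIV :: 'a set) = q ^ 2"
  shows "q ^ 6 + q * (q - 1) * (q ^ 4 + q ^ 2 + 1) div 2 \<le> card (herm_code q :: 'a mat set)"
proof -
  have "finite (UNIV :: 'a set)"
    using assms two_le_q by (intro card_ge_0_finite) simp
  with assms show ?thesis
    using card_trace_reps_ge target_size_le[OF two_le_q]
    by (simp add: card_herm_code power_mult[symmetric])
qed

end

lemma obtain_subset_with_card_containing:
  assumes "a \<in> A" "b \<in> A" "a \<noteq> b" and "2 \<le> n" "n \<le> card A"
  obtains B where "B \<subseteq> A" "a \<in> B" "b \<in> B" "card B = n"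
proof -
  have "finite A"
    using assms(4,5) by (intro card_ge_0_finite) linarith
  then have "n - 2 \<le> card (A - {a, b})"
    using assms by (simp add: card_Diff_subset)
  then obtain T where T: "T \<subseteq> A - {a, b}" "card T = n - 2"
    by (rule obtain_subset_with_card_n)
  then have "finite T"
    using \<open>finite A\<close> finite_subset by blast
  moreover have "a \<notin> T" "b \<notin> T"
    using T(1) by auto
  ultimately have "card (insert a (insert b T)) = n"
    using T(2) assms(3,4) by simp
  with T assms show ?thesis
    using that[of "insert a (insert b T)"] by blast
qed

lemma exists_herm_code_subset_card:
  assumes "C \<subseteq> hermitian3 q"
    and "\<And>c1 c2. c1 \<in> C \<Longrightarrow> c2 \<in> C \<Longrightarrow> c1 \<noteq> c2 \<Longrightarrow> d \<le> rank_dist c1 c2"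
    and "c1 \<in> C" "c2 \<in> C" "c1 \<noteq> c2" "rank_dist c1 c2 = d"
    and "2 \<le> n" "n \<le> card C"
  shows "\<exists>B \<subseteq> C. is_herm_code q d B \<and> card B = n"
proof -
  obtain B where "B \<subseteq> C" "c1 \<in> B" "c2 \<in> B" "card B = n"
    using obtain_subset_with_card_containing[OF assms(3-5,7,8)] .
  with assms(1,2,5,6) have "is_herm_code q d B"
    unfolding is_herm_code_def by blast
  with \<open>B \<subseteq> C\<close> \<open>card B = n\<close> show ?thesis
    by blast
qed

theorem mainTheorem9:
  fixes q :: nat
  assumes "\<exists>p k. prime p \<and> k \<ge> 1 \<and> q = p ^ k"
    and "card (UNIV :: 'a::{finite,field} set) = q ^ 2"
  shows "\<exists>C :: 'a mat set. is_herm_code q 2 C \<and>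
           card C = q ^ 6 + q * (q - 1) * (q ^ 4 + q ^ 2 + 1) div 2"
proof -
  obtain p k where p: "prime p" and "k \<ge> 1" and q_eq: "q = p ^ k"
    using assms(1) by blast
  have add: "\<And>x y :: 'a. (x + y) ^ q = x ^ q + y ^ q"
    using power_add_prime_power_char[OF p, of "k * 2"] assms(2) q_eq by (simp add: power_mult)
  have inv: "\<And>x :: 'a. (x ^ q) ^ q = x"
    using power_power_if_card_eq_square[OF assms(2)] .
  have "2 \<le> q"
    using prime_ge_2_nat[OF p] self_le_power[of p k] \<open>k \<ge> 1\<close> q_eq by simp
  note hyps = add inv \<open>2 \<le> q\<close>
  obtain c1 c2 :: "'a mat"
    where "c1 \<in> herm_code q" "c2 \<in> herm_code q" "c1 \<noteq> c2" "rank_dist c1 c2 = 2"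
    using herm_code_rank_dist_eq_2[OF hyps] by blast
  moreover have "2 \<le> q ^ 6 + q * (q - 1) * (q ^ 4 + q ^ 2 + 1) div 2"
    using power_mono[OF \<open>2 \<le> q\<close>, of 6] by simp
  ultimately show ?thesis
    using exists_herm_code_subset_card[OF herm_code_subset_hermitian3[OF hyps]
        two_le_rank_dist_herm_code[OF hyps]] target_size_le_card_herm_code[OF hyps assms(2)]
    by blast
qed

end
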